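(* Let $M$ be a real symmetric $n\times n$ matrix with induced signed graph $\Gamma=(G,\sigma)$, $G=(V,E)$. Let $\lambda_k$ be the $k$-th eigenvalue of $M$ with eigenfunction $f_k$, and suppose $\lambda_{k-1}<\lambda_k$ (if $k>1$). Then $$\mathfrak{S}(f_k)\ge k+v_l-1-n-z_l+z_r,$$ where $v_l$ is the number of leaves (vertices of degree $1$) of $G$, $z_l=|\{x: d_x=1,\ f_k(x)=0\}|$, and $z_r=|\{x: d_x=1,\ f_k(x)\ne0,\ f_k(x')=0 \text{ for the vertex } x'\sim x\}|$.
   Context: The induced signed graph of a real symmetric $n\times n$ matrix $M$ has vertices $x_1,\dots,x_n$, edge $\{x_i,x_j\}$ iff $i\ne j$ and $M_{ij}\ne0$, sign $\sigma_{x_ix_j}=-M_{ij}/|M_{ij}|$; $d_x$ denotes the degree of $x$. Eigenvalues $\lambda_1\le\cdots\le\lambda_n$ are listed with multiplicity; eigenfunctions are nonzero eigenvectors viewed as functions on $V$. A walk is $y_1,\dots,y_m$ ($m\ge2$) with consecutive vertices adjacent; an S-walk of $f$ is a walk with $f(y_j)\sigma_{y_jy_{j+1}}f(y_{j+1})>0$ for all $j$. $\mathfrak{S}(f)$ is the number of equivalence classes (strong nodal domains) of the relation on $\{x:f(x)\ne0\}$ "$x=y$ or an S-walk connects $x$ and $y$". *)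

theory Defs
  imports "Jordan_Normal_Form.Char_Poly" "HOL-Computational_Algebra.Polynomial_Factorial"
begin

text \<open>Eigenvalues of a real square matrix, listed with multiplicity in increasing order,
  as the roots of the characteristic polynomial. Index i is 1-based.\<close>
definition eig :: "real mat \<Rightarrow> nat \<Rightarrow> real" where
  "eig M i = sorted_list_of_multiset (proots (char_poly M)) ! (i - 1)"

definition adj :: "real mat \<Rightarrow> nat \<Rightarrow> nat \<Rightarrow> bool" where
  "adj M i j \<longleftrightarrow> i < dim_row M \<and> j < dim_row M \<and> i \<noteq> j \<and> M $$ (i, j) \<noteq> 0"

definition sgn_edge :: "real mat \<Rightarrow> nat \<Rightarrow> nat \<Rightarrow> real" where
  "sgn_edge M i j = - M $$ (i, j) / \<bar>M $$ (i, j)\<bar>"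

definition deg :: "real mat \<Rightarrow> nat \<Rightarrow> nat" where
  "deg M x = card {y. adj M x y}"

definition walk :: "real mat \<Rightarrow> nat list \<Rightarrow> bool" where
  "walk M ys \<longleftrightarrow> length ys \<ge> 2 \<and> set ys \<subseteq> {0..<dim_row M} \<and>
     (\<forall>j. Suc j < length ys \<longrightarrow> adj M (ys ! j) (ys ! Suc j))"

definition S_walk :: "real mat \<Rightarrow> real vec \<Rightarrow> nat list \<Rightarrow> bool" where
  "S_walk M f ys \<longleftrightarrow> walk M ys \<and>
     (\<forall>j. Suc j < length ys \<longrightarrow>
        f $ (ys ! j) * sgn_edge M (ys ! j) (ys ! Suc j) * f $ (ys ! Suc j) > 0)"

definition nonzero_set :: "real mat \<Rightarrow> real vec \<Rightarrow> nat set" where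
  "nonzero_set M f = {x. x < dim_row M \<and> f $ x \<noteq> 0}"

definition strong_rel :: "real mat \<Rightarrow> real vec \<Rightarrow> (nat \<times> nat) set" where
  "strong_rel M f = {(x, y). x \<in> nonzero_set M f \<and> y \<in> nonzero_set M f \<and>
      (x = y \<or> (\<exists>ys. S_walk M f ys \<and> hd ys = x \<and> last ys = y))}"

definition strong_nodal_domains :: "real mat \<Rightarrow> real vec \<Rightarrow> nat" where
  "strong_nodal_domains M f = card (nonzero_set M f // strong_rel M f)"

end

theory Submission
  imports Defs "Jordan_Normal_Form.Schur_Decomposition"
begin

(*
  Write lambda = eig M k, and call a leaf x an S-leaf if the edge to its neighbour x' is an
  S-walk of f, i.e. f(x) sigma(x x') f(x') > 0. A nonzero leaf that is not an S-leaf is a strong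
  nodal domain on its own, and so is one vertex of every component of G formed by two adjacent
  S-leaves. Hence the number of strong nodal domains is at least the number of nonzero leaves
  minus |C|, where C is the set of the remaining S-leaves.

  The eigen-equation at a leaf reads (M_xx - lambda) f(x)^2 = - M_xx' f(x) f(x'), so M_xx >= lambda
  on C and on the set Z of nonzero leaves whose neighbour is a zero of f; moreover Z u C is
  independent in G. Thus the quadratic form of M is at least lambda |u|^2 on vectors supported on
  Z u C, whereas it is below lambda |u|^2 on the nonzero vectors spanned by eigenvectors of
  lambda_1, ..., lambda_(k-1). These two spaces meet only in 0, so |Z| + |C| + k - 1 <= n, and
  the two inequalities together give the bound.
*)

section \<open>Spectral theorem for real symmetric matrices\<close>

lemma eigenvalue_of_real_symmetric_is_real:
  fixes A :: "real mat"
  assumes A: "A \<in> carrier_mat n n" and sym: "transpose_mat A = A"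
    and ev: "eigenvector (map_mat complex_of_real A) z a"
  shows "cnj a = a"
proof -
  define C where "C = map_mat complex_of_real A"
  have C: "C \<in> carrier_mat n n" using A by (simp add: C_def)
  have z: "z \<in> carrier_vec n" and z0: "z \<noteq> 0\<^sub>v n" and Cz: "C *\<^sub>v z = a \<cdot>\<^sub>v z"
    using ev C unfolding eigenvector_def C_def by auto
  have Aij: "A $$ (j, i) = A $$ (i, j)" if "i < n" "j < n" for i j
    using that sym A by (metis carrier_matD index_transpose_mat(1))
  have Czi: "(C *\<^sub>v z) $ i = (\<Sum>j<n. complex_of_real (A $$ (i,j)) * z $ j)" if "i < n" for i
    using that A z unfolding C_def by (auto simp: scalar_prod_def lessThan_atLeast0)
  define s where "s = (\<Sum>i<n. cnj (z $ i) * (C *\<^sub>v z) $ i)"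
  define N where "N = (\<Sum>i<n. (cmod (z $ i))\<^sup>2)"
  have s_eq: "s = a * complex_of_real N"
  proof -
    have "s = (\<Sum>i<n. a * (cnj (z $ i) * z $ i))"
      unfolding s_def using Cz z by (intro sum.cong) auto
    also have "\<dots> = a * (\<Sum>i<n. complex_of_real ((cmod (z $ i))\<^sup>2))"
      unfolding sum_distrib_left by (intro sum.cong refl) (simp only: complex_norm_square mult.commute)
    finally show ?thesis unfolding N_def by simp
  qed
  have s_real: "cnj s = s"
  proof -
    have "cnj s = (\<Sum>i<n. \<Sum>j<n. z $ i * (complex_of_real (A $$ (i,j)) * cnj (z $ j)))"
      unfolding s_def by (simp add: Czi sum_distrib_left)
    also have "\<dots> = (\<Sum>j<n. \<Sum>i<n. z $ i * (complex_of_real (A $$ (i,j)) * cnj (z $ j)))"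
      by (rule sum.swap)
    also have "\<dots> = (\<Sum>j<n. \<Sum>i<n. cnj (z $ j) * (complex_of_real (A $$ (j,i)) * z $ i))"
      by (intro sum.cong refl) (simp add: Aij)
    also have "\<dots> = s" unfolding s_def by (simp add: Czi sum_distrib_left)
    finally show ?thesis .
  qed
  have "N > 0"
  proof -
    obtain i where i: "i < n" "z $ i \<noteq> 0"
      using z z0 by (metis vec_eq_iff carrier_vecD index_zero_vec(1,2))
    have "(cmod (z $ i))\<^sup>2 \<le> N" unfolding N_def by (rule member_le_sum) (use i in auto)
    moreover have "(cmod (z $ i))\<^sup>2 > 0" using i by simp
    ultimately show ?thesis by linarith
  qed
  then show ?thesis using s_eq s_real by simp
qed

lemma real_symmetric_has_eigenvalue:
  fixes A :: "real mat"
  assumes A: "A \<in> carrier_mat n n" and sym: "transpose_mat A = A" and n: "n > 0"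
  shows "\<exists>e. eigenvalue A e"
proof -
  define C where "C = map_mat complex_of_real A"
  have C: "C \<in> carrier_mat n n" using A by (simp add: C_def)
  obtain as where cp: "char_poly C = (\<Prod>a\<leftarrow>as. [:-a, 1:])" and len: "length as = n"
    using char_poly_factorized[OF C] by blast
  define a where "a = hd as"
  have "a \<in> set as" unfolding a_def using len n by (cases as) auto
  then have root: "poly (char_poly C) a = 0" unfolding cp poly_prod_list by (induct as) auto
  then obtain z where "eigenvector C z a"
    using eigenvalue_root_char_poly[OF C] find_eigenvector[OF C] by blast
  then have "a = complex_of_real (Re a)"
    using eigenvalue_of_real_symmetric_is_real[OF A sym] unfolding C_def
    by (metis Reals_cnj_iff complex_is_Real_iff of_real_Re)
  then have "poly (char_poly C) a = complex_of_real (poly (char_poly A) (Re a))"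
    unfolding C_def of_real_hom.char_poly_hom[OF A] by (metis of_real_hom.poly_map_poly)
  then have "poly (char_poly A) (Re a) = 0" using root by simp
  then show ?thesis using eigenvalue_root_char_poly[OF A] by blast
qed

lemma real_self_scalar_prod_nonneg: "(v :: real vec) \<bullet> v \<ge> 0"
  unfolding scalar_prod_def by (intro sum_nonneg) auto

lemma real_self_scalar_prod_pos:
  "(v :: real vec) \<in> carrier_vec n \<Longrightarrow> v \<noteq> 0\<^sub>v n \<Longrightarrow> v \<bullet> v > 0"
  using conjugate_square_eq_0_vec[of v n] real_self_scalar_prod_nonneg[of v]
  by (simp add: conjugate_vec_def order_less_le vec_eq_iff)

lemma normalized_self_scalar_prod:
  fixes v :: "real vec"
  assumes "v \<in> carrier_vec n" "v \<bullet> v \<noteq> 0"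
  shows "((1 / sqrt (v \<bullet> v)) \<cdot>\<^sub>v v) \<bullet> ((1 / sqrt (v \<bullet> v)) \<cdot>\<^sub>v v) = 1"
  using assms real_self_scalar_prod_nonneg[of v]
  by (simp add: smult_scalar_prod_distrib scalar_prod_smult_distrib
      real_sqrt_mult[symmetric] del: real_sqrt_mult)

lemma orthonormal_completion:
  fixes v :: "real vec"
  assumes v: "v \<in> carrier_vec n" and v1: "v \<bullet> v = 1"
  shows "\<exists>W \<in> carrier_mat n n. transpose_mat W * W = 1\<^sub>m n \<and> col W 0 = v"
proof -
  have v0: "v \<noteq> 0\<^sub>v n" using v1 v by auto
  have n: "n > 0" using v v1 by (cases n) (auto simp: scalar_prod_def)
  interpret cof_vec_space n "TYPE(real)" .
  define b where "b = basis_completion v"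
  note bc = basis_completion[OF v v0, folded b_def]
  from bc(6,7) n obtain vs where bv: "b = v # vs" by (cases b) auto
  define ws where "ws = gram_schmidt n b"
  note gs = gram_schmidt_result[OF bc(2) bc(4) bc(5) ws_def]
  have len: "length ws = n" using gs(4) bc(6) by simp
  have ws0: "ws ! 0 = v"
    using gram_schmidt_hd[OF v, of vs] len n unfolding ws_def bv by (metis hd_conv_nth length_0_conv not_gr0)
  have wsc: "ws ! i \<in> carrier_vec n" if "i < n" for i using gs(3) len that by auto
  have orth: "ws ! i \<bullet> ws ! j = 0 \<longleftrightarrow> i \<noteq> j" if "i < n" "j < n" for i j
    using corthogonalD[OF gs(2)] len that by auto
  define ws' where "ws' = map (\<lambda>w. (1 / sqrt (w \<bullet> w)) \<cdot>\<^sub>v w) ws"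
  have ws'i: "ws' ! i = (1 / sqrt (ws ! i \<bullet> ws ! i)) \<cdot>\<^sub>v ws ! i" if "i < n" for i
    unfolding ws'_def using that len by simp
  have ws'c: "ws' ! i \<in> carrier_vec n" if "i < n" for i using ws'i wsc that by simp
  have orthonormal: "ws' ! i \<bullet> ws' ! j = (if i = j then 1 else 0)" if ij: "i < n" "j < n" for i j
  proof (cases "i = j")
    case True
    then show ?thesis
      using normalized_self_scalar_prod[OF wsc] orth ij by (simp add: ws'i)
  next
    case False
    then show ?thesis using orth[OF ij] wsc[OF ij(1)] wsc[OF ij(2)]
      by (simp add: ws'i[OF ij(1)] ws'i[OF ij(2)] smult_scalar_prod_distrib scalar_prod_smult_distrib)
  qed
  define W where "W = mat_of_cols n ws'"
  have W: "W \<in> carrier_mat n n" unfolding W_def using mat_of_cols_carrier(1)[of n ws'] len by (simp add: ws'_def)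
  have colW: "col W i = ws' ! i" if "i < n" for i
    unfolding W_def using that len ws'c by (simp add: ws'_def col_mat_of_cols)
  have "transpose_mat W * W = 1\<^sub>m n"
    by (rule eq_matI) (use W colW orthonormal in auto)
  moreover have "col W 0 = v" using colW[OF n] ws'i[OF n] ws0 v1 by simp
  ultimately show ?thesis using W by blast
qed

lemma orthogonal_mat_scalar_prod:
  fixes W :: "real mat"
  assumes W: "W \<in> carrier_mat n n" and WW: "transpose_mat W * W = 1\<^sub>m n"
    and x: "x \<in> carrier_vec n" and y: "y \<in> carrier_vec n"
  shows "(W *\<^sub>v x) \<bullet> (W *\<^sub>v y) = x \<bullet> y"
proof -
  have Wt: "transpose_mat W \<in> carrier_mat n n" using W by simp
  have "(W *\<^sub>v x) \<bullet> (W *\<^sub>v y) = x \<bullet> (transpose_mat W *\<^sub>v (W *\<^sub>v y))"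
    using transpose_vec_mult_scalar[OF Wt, of "W *\<^sub>v y" x] W x y by simp
  also have "transpose_mat W *\<^sub>v (W *\<^sub>v y) = y"
    using assoc_mult_mat_vec[OF Wt W y, symmetric] WW y by simp
  finally show ?thesis .
qed

lemma scalar_prod_vCons:
  "v \<in> carrier_vec m \<Longrightarrow> w \<in> carrier_vec m \<Longrightarrow> vCons a v \<bullet> vCons b w = a * b + v \<bullet> w"
  by (simp add: scalar_prod_def vec_index_vCons sum.atLeast0_lessThan_Suc_shift del: sum.op_ivl_Suc)

lemma smult_vCons: "c \<cdot>\<^sub>v vCons a v = vCons (c * a) (c \<cdot>\<^sub>v v)"
  by (intro eq_vecI) (auto simp: vec_index_vCons)

lemma mult_mat_vec_vCons_deflated:
  fixes A :: "real mat"
  assumes A: "A \<in> carrier_mat (Suc m) (Suc m)"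
    and row0: "\<And>j. j < Suc m \<Longrightarrow> A $$ (0, j) = (if j = 0 then e else 0)"
    and col0: "\<And>i. i < Suc m \<Longrightarrow> A $$ (i, 0) = (if i = 0 then e else 0)"
    and y: "y \<in> carrier_vec m"
  shows "A *\<^sub>v vCons a y = vCons (e * a) (mat m m (\<lambda>(i, j). A $$ (Suc i, Suc j)) *\<^sub>v y)"
proof (rule eq_vecI)
  fix i assume "i < dim_vec (vCons (e * a) (mat m m (\<lambda>(i, j). A $$ (Suc i, Suc j)) *\<^sub>v y))"
  then have i: "i < Suc m" by simp
  show "(A *\<^sub>v vCons a y) $ i = vCons (e * a) (mat m m (\<lambda>(i, j). A $$ (Suc i, Suc j)) *\<^sub>v y) $ i"
    using A i y row0 col0
    by (cases i) (auto simp: scalar_prod_def vec_index_vCons sum.atLeast0_lessThan_Suc_shift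
        simp del: sum.op_ivl_Suc)
qed (use A in simp)

lemma orthogonal_similar_first_col:
  fixes A W :: "real mat"
  assumes A: "A \<in> carrier_mat n n" and W: "W \<in> carrier_mat n n"
    and WW: "transpose_mat W * W = 1\<^sub>m n" and Wv: "col W 0 = v" and Av: "A *\<^sub>v v = e \<cdot>\<^sub>v v"
    and i: "i < n"
  shows "(transpose_mat W * A * W) $$ (i, 0) = (if i = 0 then e else 0)"
proof -
  have "(transpose_mat W * A * W) $$ (i, 0) = row (transpose_mat W) i \<bullet> col (A * W) 0"
    using W A i by (simp add: assoc_mult_mat[of _ n n _ n _ n])
  also have "col (A * W) 0 = e \<cdot>\<^sub>v col W 0" using col_mult2[OF A W, of 0] Wv Av i by simp
  also have "row (transpose_mat W) i \<bullet> (e \<cdot>\<^sub>v col W 0) = e * (transpose_mat W * W) $$ (i, 0)"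
    using W i by (simp add: scalar_prod_smult_distrib)
  finally show ?thesis using WW i by simp
qed

lemma real_symmetric_unit_eigenvector:
  fixes A :: "real mat"
  assumes A: "A \<in> carrier_mat n n" and sym: "transpose_mat A = A" and n: "n > 0"
  obtains e v where "v \<in> carrier_vec n" "v \<bullet> v = 1" "A *\<^sub>v v = e \<cdot>\<^sub>v v"
proof -
  obtain e v0 where "eigenvector A v0 e"
    using real_symmetric_has_eigenvalue[OF A sym n] find_eigenvector[OF A] by blast
  then have v0: "v0 \<in> carrier_vec n" and Av0: "A *\<^sub>v v0 = e \<cdot>\<^sub>v v0" and "v0 \<bullet> v0 \<noteq> 0"
    using A real_self_scalar_prod_pos[of v0 n] unfolding eigenvector_def by auto
  define v where "v = (1 / sqrt (v0 \<bullet> v0)) \<cdot>\<^sub>v v0"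
  show thesis
  proof (rule that)
    show "v \<in> carrier_vec n" "v \<bullet> v = 1"
      using v0 normalized_self_scalar_prod[OF v0 \<open>v0 \<bullet> v0 \<noteq> 0\<close>] by (auto simp: v_def)
    show "A *\<^sub>v v = e \<cdot>\<^sub>v v"
      using Av0 v0 A by (simp add: v_def mult_mat_vec smult_smult_assoc mult.commute)
  qed
qed

(* In the orthonormal basis formed by the columns of W, A is the direct sum of e and B. *)
lemma real_symmetric_deflation:
  fixes A :: "real mat"
  assumes A: "A \<in> carrier_mat (Suc m) (Suc m)" and sym: "transpose_mat A = A"
  obtains W B e where "W \<in> carrier_mat (Suc m) (Suc m)" "transpose_mat W * W = 1\<^sub>m (Suc m)"
    "B \<in> carrier_mat m m" "transpose_mat B = B"
    "\<And>a y. y \<in> carrier_vec m \<Longrightarrow> A *\<^sub>v (W *\<^sub>v vCons a y) = W *\<^sub>v vCons (e * a) (B *\<^sub>v y)"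
proof -
  let ?n = "Suc m"
  obtain e v where v: "v \<in> carrier_vec ?n" and v1: "v \<bullet> v = 1" and Av: "A *\<^sub>v v = e \<cdot>\<^sub>v v"
    using real_symmetric_unit_eigenvector[OF A sym] by blast
  obtain W where W: "W \<in> carrier_mat ?n ?n" and WW: "transpose_mat W * W = 1\<^sub>m ?n"
    and Wv: "col W 0 = v"
    using orthonormal_completion[OF v v1] by blast
  have Wt: "transpose_mat W \<in> carrier_mat ?n ?n" using W by simp
  have WW': "W * transpose_mat W = 1\<^sub>m ?n" using mat_mult_left_right_inverse[OF Wt W WW] .
  define A' where "A' = transpose_mat W * A * W"
  have A': "A' \<in> carrier_mat ?n ?n" unfolding A'_def using W A by simp
  have symA': "transpose_mat A' = A'"
    unfolding A'_def using W A sym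
    by (simp add: transpose_mult[of _ ?n ?n _ ?n] assoc_mult_mat[of _ ?n ?n _ ?n _ ?n])
  have AW: "A * W = W * A'"
  proof -
    have "W * A' = (W * transpose_mat W) * (A * W)" unfolding A'_def
      using W A by (simp add: assoc_mult_mat[of _ ?n ?n _ ?n _ ?n])
    then show ?thesis using WW' A W by simp
  qed
  have col0: "A' $$ (i, 0) = (if i = 0 then e else 0)" if "i < ?n" for i
    unfolding A'_def using orthogonal_similar_first_col[OF A W WW Wv Av that] .
  have row0: "A' $$ (0, j) = (if j = 0 then e else 0)" if "j < ?n" for j
    using col0[OF that] symA' A' that by (metis carrier_matD index_transpose_mat(1) zero_less_Suc)
  define B where "B = mat m m (\<lambda>(i, j). A' $$ (Suc i, Suc j))"
  have symB: "transpose_mat B = B"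
    unfolding B_def using symA' A'
    by (intro eq_matI) (auto, metis Suc_less_eq carrier_matD index_transpose_mat(1))
  show thesis
  proof (rule that[OF W WW _ symB])
    fix a :: real and y :: "real vec" assume y: "y \<in> carrier_vec m"
    have y': "vCons a y \<in> carrier_vec ?n" using y by simp
    have "A *\<^sub>v (W *\<^sub>v vCons a y) = (A * W) *\<^sub>v vCons a y"
      using assoc_mult_mat_vec[OF A W y'] by simp
    also have "\<dots> = W *\<^sub>v (A' *\<^sub>v vCons a y)"
      unfolding AW using assoc_mult_mat_vec[OF W A' y'] .
    also have "A' *\<^sub>v vCons a y = vCons (e * a) (B *\<^sub>v y)"
      unfolding B_def using mult_mat_vec_vCons_deflated[OF A' row0 col0 y] .
    finally show "A *\<^sub>v (W *\<^sub>v vCons a y) = W *\<^sub>v vCons (e * a) (B *\<^sub>v y)" .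
  qed (simp add: B_def)
qed

lemma real_symmetric_orthonormal_eigenbasis:
  fixes A :: "real mat"
  assumes "A \<in> carrier_mat n n" "transpose_mat A = A"
  shows "\<exists>vs \<mu>. (\<forall>i<n. vs i \<in> carrier_vec n \<and> A *\<^sub>v vs i = \<mu> i \<cdot>\<^sub>v vs i) \<and>
      (\<forall>i<n. \<forall>j<n. vs i \<bullet> vs j = (if i = j then 1 else 0))"
  using assms
proof (induction n arbitrary: A)
  case (Suc m)
  show ?case
  proof (rule real_symmetric_deflation[OF Suc.prems])
    fix W B e
    assume W: "W \<in> carrier_mat (Suc m) (Suc m)" and WW: "transpose_mat W * W = 1\<^sub>m (Suc m)"
      and B: "B \<in> carrier_mat m m" "transpose_mat B = B"
      and deflate: "\<And>a y. y \<in> carrier_vec m \<Longrightarrow>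
        A *\<^sub>v (W *\<^sub>v vCons a y) = W *\<^sub>v vCons (e * a) (B *\<^sub>v y)"
    obtain ws \<nu> where ws: "\<And>i. i < m \<Longrightarrow> ws i \<in> carrier_vec m \<and> B *\<^sub>v ws i = \<nu> i \<cdot>\<^sub>v ws i"
      and ws_on: "\<And>i j. i < m \<Longrightarrow> j < m \<Longrightarrow> ws i \<bullet> ws j = (if i = j then 1 else 0)"
      using Suc.IH[OF B] by auto
    define z where "z i = (if i = 0 then vCons 1 (0\<^sub>v m) else vCons 0 (ws (i - 1)))" for i
    define \<mu> where "\<mu> i = (if i = 0 then e else \<nu> (i - 1))" for i
    have wsc: "ws (i - 1) \<in> carrier_vec m" if "0 < i" "i < Suc m" for i
      using ws[of "i - 1"] that by simp
    have zc: "z i \<in> carrier_vec (Suc m)" if "i < Suc m" for i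
      using wsc[of i] that by (simp add: z_def)
    have eigen: "A *\<^sub>v (W *\<^sub>v z i) = \<mu> i \<cdot>\<^sub>v (W *\<^sub>v z i)" if i: "i < Suc m" for i
    proof (cases "i = 0")
      case True
      have "B *\<^sub>v 0\<^sub>v m = e \<cdot>\<^sub>v 0\<^sub>v m" using B by (intro eq_vecI) (auto simp: scalar_prod_def)
      then show ?thesis
        using True W by (simp add: z_def \<mu>_def deflate smult_vCons mult_mat_vec[symmetric])
    next
      case False
      then show ?thesis
        using ws[of "i - 1"] i W by (simp add: z_def \<mu>_def deflate smult_vCons mult_mat_vec[symmetric])
    qed
    have orthonormal: "z i \<bullet> z j = (if i = j then 1 else 0)" if ij: "i < Suc m" "j < Suc m" for i j
    proof (cases "i = 0 \<or> j = 0")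
      case True
      then show ?thesis using wsc[OF _ ij(1)] wsc[OF _ ij(2)] by (fastforce simp: z_def scalar_prod_vCons)
    next
      case False
      then have "i - 1 = j - 1 \<longleftrightarrow> i = j" "i - 1 < m" "j - 1 < m" using ij by linarith+
      then show ?thesis using False ws_on[of "i - 1" "j - 1"] by (simp add: z_def scalar_prod_vCons)
    qed
    show ?case
    proof (intro exI[of _ "\<lambda>i. W *\<^sub>v z i"] exI[of _ \<mu>] conjI allI impI)
      fix i j assume i: "i < Suc m" and j: "j < Suc m"
      show "(W *\<^sub>v z i) \<bullet> (W *\<^sub>v z j) = (if i = j then 1 else 0)"
        using orthogonal_mat_scalar_prod[OF W WW zc[OF i] zc[OF j]] orthonormal[OF i j] by simp
    next
      fix i assume i: "i < Suc m"
      show "W *\<^sub>v z i \<in> carrier_vec (Suc m)" using W zc[OF i] by simp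
      show "A *\<^sub>v (W *\<^sub>v z i) = \<mu> i \<cdot>\<^sub>v (W *\<^sub>v z i)" using eigen[OF i] .
    qed
  qed
qed simp

lemma proots_prod_linear_factors: "proots (\<Prod>a\<leftarrow>xs. [:- a, 1:]) = mset (xs :: real list)"
proof (induction xs)
  case (Cons a xs)
  have "(\<Prod>a\<leftarrow>xs. [:- a, 1:]) \<noteq> (0 :: real poly)" by (subst prod_list_zero_iff) auto
  then have "proots ([:- a, 1:] * (\<Prod>a\<leftarrow>xs. [:- a, 1:])) = {#a#} + mset xs"
    using Cons proots_linear_factor[of "- a"] by (subst proots_mult) auto
  then show ?case by simp
qed simp

lemma real_symmetric_orthogonal_diagonalization:
  fixes A :: "real mat"
  assumes A: "A \<in> carrier_mat n n" and sym: "transpose_mat A = A"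
  shows "\<exists>Om \<mu>. Om \<in> carrier_mat n n \<and> transpose_mat Om * Om = 1\<^sub>m n \<and>
      A * Om = Om * mat_diag n \<mu> \<and> proots (char_poly A) = mset (map \<mu> [0..<n])"
proof -
  obtain vs \<mu> where ev: "\<And>i. i < n \<Longrightarrow> vs i \<in> carrier_vec n \<and> A *\<^sub>v vs i = \<mu> i \<cdot>\<^sub>v vs i"
    and on: "\<And>i j. i < n \<Longrightarrow> j < n \<Longrightarrow> vs i \<bullet> vs j = (if i = j then 1 else 0)"
    using real_symmetric_orthonormal_eigenbasis[OF A sym] by blast
  define Om where "Om = mat n n (\<lambda>(i, j). vs j $ i)"
  define D where "D = mat_diag n \<mu>"
  have Om: "Om \<in> carrier_mat n n" and D: "D \<in> carrier_mat n n"
    and Ot: "transpose_mat Om \<in> carrier_mat n n"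
    unfolding Om_def D_def by auto
  have colO: "col Om j = vs j" if "j < n" for j
    using ev[OF that] that unfolding Om_def by (intro eq_vecI) auto
  have OtO: "transpose_mat Om * Om = 1\<^sub>m n"
    by (rule eq_matI) (use Om colO on in auto)
  have OOt: "Om * transpose_mat Om = 1\<^sub>m n" using mat_mult_left_right_inverse[OF Ot Om OtO] .
  have AO: "A * Om = Om * D"
  proof (rule eq_matI)
    fix i j assume "i < dim_row (Om * D)" "j < dim_col (Om * D)"
    then have i: "i < n" and j: "j < n" using Om D by auto
    have "(A * Om) $$ (i, j) = (A *\<^sub>v vs j) $ i" using A Om i j colO[OF j] by simp
    also have "\<dots> = vs j $ i * \<mu> j" using ev[OF j] i by (metis carrier_vecD index_smult_vec(1) mult.commute)
    also have "\<dots> = (Om * D) $$ (i, j)"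
      unfolding D_def using mat_diag_mult_right[OF Om] i j by (simp add: Om_def)
    finally show "(A * Om) $$ (i, j) = (Om * D) $$ (i, j)" .
  qed (use A Om D in auto)
  have "A = Om * D * transpose_mat Om"
  proof -
    have "A = A * (Om * transpose_mat Om)" using A OOt by simp
    also have "\<dots> = (A * Om) * transpose_mat Om" using A Om Ot by (simp add: assoc_mult_mat)
    finally show ?thesis unfolding AO .
  qed
  then have "similar_mat A D" unfolding similar_mat_def similar_mat_wit_def
    using A Om D Ot OOt OtO by (intro exI[of _ Om] exI[of _ "transpose_mat Om"]) auto
  then have "char_poly A = char_poly D" by (rule char_poly_similar)
  also have "\<dots> = (\<Prod>a\<leftarrow>diag_mat D. [:- a, 1:])"
    by (rule char_poly_upper_triangular[OF D]) (auto simp: upper_triangular_def D_def mat_diag_def)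
  also have "diag_mat D = map \<mu> [0..<n]"
    unfolding diag_mat_def D_def mat_diag_def by (intro map_cong) auto
  finally have "proots (char_poly A) = mset (map \<mu> [0..<n])" by (simp only: proots_prod_linear_factors)
  then show ?thesis using Om OtO AO unfolding D_def by blast
qed

section \<open>Eigenvalues below a diagonal block\<close>

lemma scalar_prod_self_sum_squares: "(c :: real vec) \<in> carrier_vec n \<Longrightarrow> c \<bullet> c = (\<Sum>j<n. (c $ j)\<^sup>2)"
  by (simp add: scalar_prod_def lessThan_atLeast0 power2_eq_square)

lemma quadratic_form_eigen_coordinates:
  fixes A Om :: "real mat"
  assumes A: "A \<in> carrier_mat n n" and Om: "Om \<in> carrier_mat n n"
    and OtO: "transpose_mat Om * Om = 1\<^sub>m n" and AO: "A * Om = Om * mat_diag n \<mu>"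
    and c: "c \<in> carrier_vec n"
  shows "(Om *\<^sub>v c) \<bullet> (A *\<^sub>v (Om *\<^sub>v c)) = (\<Sum>j<n. \<mu> j * (c $ j)\<^sup>2)"
proof -
  have "A *\<^sub>v (Om *\<^sub>v c) = Om *\<^sub>v (mat_diag n \<mu> *\<^sub>v c)"
    using A Om c AO by (metis assoc_mult_mat_vec mat_diag_dim)
  then have "(Om *\<^sub>v c) \<bullet> (A *\<^sub>v (Om *\<^sub>v c)) = c \<bullet> (mat_diag n \<mu> *\<^sub>v c)"
    using orthogonal_mat_scalar_prod[OF Om OtO c mult_mat_vec_carrier[OF mat_diag_dim c]] by simp
  also have "mat_diag n \<mu> *\<^sub>v c = vec n (\<lambda>j. \<mu> j * c $ j)"
  proof (rule eq_vecI)
    fix j assume "j < dim_vec (vec n (\<lambda>j. \<mu> j * c $ j))"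
    then have j: "j < n" by simp
    have "(mat_diag n \<mu> *\<^sub>v c) $ j = (\<Sum>i\<in>{0..<n}. (if j = i then \<mu> i else 0) * c $ i)"
      using j c by (simp add: mat_diag_def scalar_prod_def)
    also have "\<dots> = (\<Sum>i\<in>{0..<n}. if j = i then \<mu> i * c $ i else 0)"
      by (intro sum.cong) auto
    finally show "(mat_diag n \<mu> *\<^sub>v c) $ j = vec n (\<lambda>j. \<mu> j * c $ j) $ j" using j by simp
  qed (simp add: mat_diag_def)
  also have "c \<bullet> vec n (\<lambda>j. \<mu> j * c $ j) = (\<Sum>j<n. \<mu> j * (c $ j)\<^sup>2)"
    using c by (simp add: scalar_prod_def lessThan_atLeast0 power2_eq_square mult_ac)
  finally show ?thesis .
qed

lemma quadratic_form_ge_on_diagonal_block: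
  fixes A :: "real mat"
  assumes A: "A \<in> carrier_mat n n" and I: "I \<subseteq> {0..<n}"
    and diag: "\<And>x. x \<in> I \<Longrightarrow> A $$ (x, x) \<ge> lam"
    and off: "\<And>x y. x \<in> I \<Longrightarrow> y \<in> I \<Longrightarrow> x \<noteq> y \<Longrightarrow> A $$ (x, y) = 0"
    and u: "u \<in> carrier_vec n" and supp: "\<And>i. i < n \<Longrightarrow> i \<notin> I \<Longrightarrow> u $ i = 0"
  shows "lam * (u \<bullet> u) \<le> u \<bullet> (A *\<^sub>v u)"
proof -
  have Au: "(A *\<^sub>v u) $ i = A $$ (i, i) * u $ i" if i: "i \<in> I" for i
  proof -
    have "(A *\<^sub>v u) $ i = (\<Sum>k\<in>{0..<n}. A $$ (i, k) * u $ k)"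
      using A u I i by (auto simp: scalar_prod_def row_def)
    also have "\<dots> = (\<Sum>k\<in>{0..<n}. if k = i then A $$ (i, i) * u $ i else 0)"
      using off[OF i] supp by (intro sum.cong refl) (metis mult_eq_0_iff atLeastLessThan_iff)
    finally show ?thesis using I i by auto
  qed
  have "lam * (u \<bullet> u) = (\<Sum>i\<in>{0..<n}. lam * (u $ i)\<^sup>2)"
    using u by (simp add: scalar_prod_def sum_distrib_left power2_eq_square)
  also have "\<dots> \<le> (\<Sum>i\<in>{0..<n}. if i \<in> I then A $$ (i, i) * (u $ i)\<^sup>2 else 0)"
    using supp diag by (intro sum_mono) (auto intro: mult_right_mono)
  also have "\<dots> = u \<bullet> (A *\<^sub>v u)"
    using A u supp unfolding scalar_prod_def
    by (auto simp: Au power2_eq_square simp del: index_mult_mat_vec intro!: sum.cong)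
  finally show ?thesis .
qed

(* Om c is a combination of eigenvectors for eigenvalues below lam, so its Rayleigh quotient is
   below lam unless c = 0, while it is at least lam if Om c is supported on I. *)
lemma eigen_coordinates_vanish_on_diagonal_block:
  fixes A Om :: "real mat"
  assumes A: "A \<in> carrier_mat n n" and Om: "Om \<in> carrier_mat n n"
    and OtO: "transpose_mat Om * Om = 1\<^sub>m n" and AO: "A * Om = Om * mat_diag n \<mu>"
    and I: "I \<subseteq> {0..<n}" and diag: "\<And>x. x \<in> I \<Longrightarrow> A $$ (x, x) \<ge> lam"
    and off: "\<And>x y. x \<in> I \<Longrightarrow> y \<in> I \<Longrightarrow> x \<noteq> y \<Longrightarrow> A $$ (x, y) = 0"
    and c: "c \<in> carrier_vec n" and below: "\<And>j. j < n \<Longrightarrow> lam \<le> \<mu> j \<Longrightarrow> c $ j = 0"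
    and supp: "\<And>i. i < n \<Longrightarrow> i \<notin> I \<Longrightarrow> (Om *\<^sub>v c) $ i = 0"
  shows "c = 0\<^sub>v n"
proof -
  have u: "Om *\<^sub>v c \<in> carrier_vec n" using Om c by simp
  have "lam * (\<Sum>j<n. (c $ j)\<^sup>2) \<le> (\<Sum>j<n. \<mu> j * (c $ j)\<^sup>2)"
    using quadratic_form_ge_on_diagonal_block[OF A I diag off u supp]
    unfolding quadratic_form_eigen_coordinates[OF A Om OtO AO c]
      orthogonal_mat_scalar_prod[OF Om OtO c c] scalar_prod_self_sum_squares[OF c] .
  then have "(\<Sum>j<n. (lam - \<mu> j) * (c $ j)\<^sup>2) \<le> 0"
    by (simp add: algebra_simps sum_subtractf sum_distrib_left)
  moreover have nonneg: "0 \<le> (lam - \<mu> j) * (c $ j)\<^sup>2" if "j \<in> {..<n}" for j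
    using below[of j] that by (cases "lam \<le> \<mu> j") auto
  moreover have "0 \<le> (\<Sum>j<n. (lam - \<mu> j) * (c $ j)\<^sup>2)" using nonneg by (rule sum_nonneg)
  ultimately have "(\<Sum>j<n. (lam - \<mu> j) * (c $ j)\<^sup>2) = 0" by linarith
  moreover have "(\<Sum>j<n. (lam - \<mu> j) * (c $ j)\<^sup>2) = 0 \<longleftrightarrow>
      (\<forall>j\<in>{..<n}. (lam - \<mu> j) * (c $ j)\<^sup>2 = 0)"
    using nonneg by (intro sum_nonneg_eq_0_iff) auto
  ultimately have zero: "(lam - \<mu> j) * (c $ j)\<^sup>2 = 0" if "j < n" for j
    using that by blast
  show ?thesis
  proof (rule eq_vecI)
    fix j assume "j < dim_vec (0\<^sub>v n)"
    then have j: "j < n" by simp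
    show "c $ j = 0\<^sub>v n $ j"
    proof (cases "lam \<le> \<mu> j")
      case False
      then show ?thesis using zero[OF j] j by simp
    qed (use below j in simp)
  qed (use c in simp)
qed

lemma eigen_block_combination_trivial:
  fixes A Om :: "real mat"
  assumes A: "A \<in> carrier_mat n n" and Om: "Om \<in> carrier_mat n n"
    and OtO: "transpose_mat Om * Om = 1\<^sub>m n" and AO: "A * Om = Om * mat_diag n \<mu>"
    and I: "I \<subseteq> {0..<n}" and diag: "\<And>x. x \<in> I \<Longrightarrow> A $$ (x, x) \<ge> lam"
    and off: "\<And>x y. x \<in> I \<Longrightarrow> y \<in> I \<Longrightarrow> x \<noteq> y \<Longrightarrow> A $$ (x, y) = 0"
    and J: "J \<subseteq> {j. j < n \<and> \<mu> j < lam}"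
    and comb: "\<And>i. i < n \<Longrightarrow> (\<Sum>j\<in>J. a j * Om $$ (i, j)) + (if i \<in> I then b i else 0) = 0"
  shows "\<forall>j\<in>J. a j = 0" and "\<forall>x\<in>I. b x = 0"
proof -
  define c where "c = vec n (\<lambda>j. if j \<in> J then a j else 0)"
  have c: "c \<in> carrier_vec n" unfolding c_def by simp
  have Omc: "(Om *\<^sub>v c) $ i = (\<Sum>j\<in>J. a j * Om $$ (i, j))" if i: "i < n" for i
  proof -
    have "(Om *\<^sub>v c) $ i = (\<Sum>j\<in>{0..<n}. if j \<in> J then a j * Om $$ (i, j) else 0)"
      using Om i by (auto simp: c_def scalar_prod_def mult.commute intro!: sum.cong)
    also have "\<dots> = (\<Sum>j\<in>J. a j * Om $$ (i, j))"
      using J by (simp add: sum.If_cases Int_absorb1 subset_iff)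
    finally show ?thesis .
  qed
  have "c = 0\<^sub>v n"
  proof (rule eigen_coordinates_vanish_on_diagonal_block[OF A Om OtO AO I _ _ c])
    show "c $ j = 0" if "j < n" "lam \<le> \<mu> j" for j using that J by (auto simp: c_def)
    show "(Om *\<^sub>v c) $ i = 0" if "i < n" "i \<notin> I" for i using comb[of i] Omc[of i] that by simp
  qed (use diag off in auto)
  then show a0: "\<forall>j\<in>J. a j = 0"
    using J unfolding c_def by (auto simp: vec_eq_iff split: if_splits)
  show "\<forall>x\<in>I. b x = 0"
  proof
    fix x assume "x \<in> I"
    then show "b x = 0" using comb[of x] a0 I by auto
  qed
qed

lemma col_ne_unit_vec_diagonal_block:
  fixes A Om :: "real mat"
  assumes A: "A \<in> carrier_mat n n" and Om: "Om \<in> carrier_mat n n"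
    and OtO: "transpose_mat Om * Om = 1\<^sub>m n" and AO: "A * Om = Om * mat_diag n \<mu>"
    and I: "I \<subseteq> {0..<n}" and diag: "\<And>x. x \<in> I \<Longrightarrow> A $$ (x, x) \<ge> lam"
    and off: "\<And>x y. x \<in> I \<Longrightarrow> y \<in> I \<Longrightarrow> x \<noteq> y \<Longrightarrow> A $$ (x, y) = 0"
    and j: "j < n" "\<mu> j < lam" and x: "x \<in> I"
  shows "col Om j \<noteq> unit_vec n x"
proof
  assume eq: "col Om j = unit_vec n x"
  have comb: "(\<Sum>j'\<in>{j}. 1 * Om $$ (i, j')) + (if i \<in> I then if i = x then - 1 else 0 else 0) = 0"
    if "i < n" for i
    using arg_cong[OF eq, of "\<lambda>v. v $ i"] Om j x that I by auto
  have "\<forall>j'\<in>{j}. (1::real) = 0"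
    using eigen_block_combination_trivial(1)[OF A Om OtO AO I _ _ _ comb] diag off j by blast
  then show False by simp
qed

lemma card_eigenvalues_below_add_card_diagonal_block_le:
  fixes A Om :: "real mat"
  assumes A: "A \<in> carrier_mat n n" and Om: "Om \<in> carrier_mat n n"
    and OtO: "transpose_mat Om * Om = 1\<^sub>m n" and AO: "A * Om = Om * mat_diag n \<mu>"
    and I: "I \<subseteq> {0..<n}" and diag: "\<And>x. x \<in> I \<Longrightarrow> A $$ (x, x) \<ge> lam"
    and off: "\<And>x y. x \<in> I \<Longrightarrow> y \<in> I \<Longrightarrow> x \<noteq> y \<Longrightarrow> A $$ (x, y) = 0"
  shows "card {j. j < n \<and> \<mu> j < lam} + card I \<le> n"
proof -
  define J where "J = {j. j < n \<and> \<mu> j < lam}"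
  define e :: "nat \<Rightarrow> real vec" where "e x = unit_vec n x" for x
  have combination_trivial: "(\<forall>j\<in>J'. a j = 0) \<and> (\<forall>x\<in>I. b x = 0)"
    if "J' \<subseteq> J" "\<And>i. i < n \<Longrightarrow> (\<Sum>j\<in>J'. a j * Om $$ (i, j)) + (if i \<in> I then b i else 0) = 0"
    for J' a b
    using eigen_block_combination_trivial[OF A Om OtO AO I _ _ _ that(2)] diag off that(1)
    unfolding J_def by blast
  have finJ: "finite J" unfolding J_def by simp
  have finI: "finite I" using I finite_subset by blast
  have col_index: "col Om j $ i = Om $$ (i, j)" if "i < n" "j < n" for i j using Om that by simp
  have inj_col: "inj_on (col Om) J"
  proof (rule inj_onI)
    fix i j assume "i \<in> J" "j \<in> J" "col Om i = col Om j"
    then have "(transpose_mat Om * Om) $$ (i, j) = (transpose_mat Om * Om) $$ (i, i)"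
      using Om unfolding J_def by simp
    then show "i = j" using OtO \<open>i \<in> J\<close> \<open>j \<in> J\<close> unfolding J_def by (simp split: if_splits)
  qed
  have inj_e: "inj_on e I" unfolding e_def using I by (intro inj_onI) auto
  have disj: "col Om ` J \<inter> e ` I = {}"
    using col_ne_unit_vec_diagonal_block[OF A Om OtO AO I] diag off unfolding J_def e_def by blast
  interpret vec_space "TYPE(real)" n .
  define S where "S = col Om ` J \<union> e ` I"
  have SC: "S \<subseteq> carrier_vec n" unfolding S_def e_def using Om by (auto simp: carrier_vecI)
  have "lin_indpt S"
  proof (rule finite_lin_indpt2)
    show "finite S" unfolding S_def using finJ finI by simp
    fix a assume lc: "lincomb a S = 0\<^sub>v n"
    have "(\<Sum>j\<in>J. a (col Om j) * Om $$ (i, j)) + (if i \<in> I then a (e i) else 0) = 0"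
      if i: "i < n" for i
    proof -
      have "0 = lincomb a S $ i" using lc i by simp
      also have "\<dots> = (\<Sum>v\<in>S. a v * v $ i)" by (rule lincomb_index[OF i SC])
      also have "\<dots> = (\<Sum>v\<in>col Om ` J. a v * v $ i) + (\<Sum>v\<in>e ` I. a v * v $ i)"
        unfolding S_def by (rule sum.union_disjoint) (use finJ finI disj in auto)
      also have "(\<Sum>v\<in>col Om ` J. a v * v $ i) = (\<Sum>j\<in>J. a (col Om j) * Om $$ (i, j))"
        using col_index[OF i] by (subst sum.reindex[OF inj_col]) (auto simp: J_def)
      also have "(\<Sum>v\<in>e ` I. a v * v $ i) = (\<Sum>y\<in>I. if y = i then a (e i) else 0)"
        by (subst sum.reindex[OF inj_e]) (use i I in \<open>auto simp: e_def intro!: sum.cong\<close>)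
      finally show ?thesis using finI by simp
    qed
    then have "(\<forall>j\<in>J. a (col Om j) = 0) \<and> (\<forall>x\<in>I. a (e x) = 0)"
      by (rule combination_trivial[OF order_refl])
    then show "\<forall>v\<in>S. a v = 0" unfolding S_def by blast
  qed (rule SC)
  then have "card S \<le> n" using li_le_dim(2)[OF fin_dim SC] dim_is_n by simp
  moreover have "card S = card J + card I"
    unfolding S_def using card_Un_disjoint[OF _ _ disj] finJ finI card_image[OF inj_col] card_image[OF inj_e]
    by simp
  ultimately show ?thesis unfolding J_def by simp
qed

lemma card_eigenvalues_below_eig:
  fixes A :: "real mat"
  assumes roots: "proots (char_poly A) = mset (map \<mu> [0..<n])" and k: "1 \<le> k" "k \<le> n"
    and gap: "k > 1 \<longrightarrow> eig A (k - 1) < eig A k"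
  shows "k - 1 \<le> card {j. j < n \<and> \<mu> j < eig A k}"
proof -
  define s where "s = sort (map \<mu> [0..<n])"
  have eig_s: "eig A i = s ! (i - 1)" for i
    unfolding eig_def roots s_def by (simp only: sorted_list_of_multiset_mset)
  have len: "length s = n" unfolding s_def by simp
  have first: "{j. j < k - 1} \<subseteq> {j. j < length s \<and> s ! j < eig A k}"
  proof
    fix j assume "j \<in> {j. j < k - 1}"
    then have j: "j < k - 1" by simp
    have "s ! j \<le> s ! (k - 2)" using j len k unfolding s_def by (intro sorted_nth_mono) auto
    also have "s ! (k - 2) < s ! (k - 1)" using gap j unfolding eig_s by (simp add: numeral_2_eq_2)
    finally show "j \<in> {j. j < length s \<and> s ! j < eig A k}" using j len k unfolding eig_s by simp
  qed
  have "k - 1 \<le> card {j. j < length s \<and> s ! j < eig A k}"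
    using card_mono[OF _ first] by simp
  also have "\<dots> = length (filter (\<lambda>x. x < eig A k) s)" by (simp add: length_filter_conv_card)
  also have "\<dots> = length (filter (\<lambda>x. x < eig A k) (map \<mu> [0..<n]))"
    unfolding s_def by (metis mset_filter mset_sort size_mset)
  also have "\<dots> = card {j. j < n \<and> map \<mu> [0..<n] ! j < eig A k}"
    by (simp add: length_filter_conv_card)
  also have "{j. j < n \<and> map \<mu> [0..<n] ! j < eig A k} = {j. j < n \<and> \<mu> j < eig A k}"
    by auto
  finally show ?thesis .
qed

lemma card_diagonal_block_le:
  fixes A :: "real mat"
  assumes A: "A \<in> carrier_mat n n" and sym: "transpose_mat A = A"
    and k: "1 \<le> k" "k \<le> n" and gap: "k > 1 \<longrightarrow> eig A (k - 1) < eig A k"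
    and I: "I \<subseteq> {0..<n}" and diag: "\<And>x. x \<in> I \<Longrightarrow> A $$ (x, x) \<ge> eig A k"
    and off: "\<And>x y. x \<in> I \<Longrightarrow> y \<in> I \<Longrightarrow> x \<noteq> y \<Longrightarrow> A $$ (x, y) = 0"
  shows "card I + k \<le> n + 1"
proof -
  obtain Om \<mu> where Om: "Om \<in> carrier_mat n n" and OtO: "transpose_mat Om * Om = 1\<^sub>m n"
    and AO: "A * Om = Om * mat_diag n \<mu>" and roots: "proots (char_poly A) = mset (map \<mu> [0..<n])"
    using real_symmetric_orthogonal_diagonalization[OF A sym] by blast
  have "card {j. j < n \<and> \<mu> j < eig A k} + card I \<le> n"
    by (rule card_eigenvalues_below_add_card_diagonal_block_le[OF A Om OtO AO I]) (use diag off in auto)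
  moreover have "k - 1 \<le> card {j. j < n \<and> \<mu> j < eig A k}"
    by (rule card_eigenvalues_below_eig[OF roots k gap])
  ultimately show ?thesis using k by linarith
qed


section \<open>Leaves and strong nodal domains\<close>

(* The unique neighbour of a leaf; unspecified for other vertices. *)
definition leaf_nb :: "real mat \<Rightarrow> nat \<Rightarrow> nat" where
  "leaf_nb M x = (THE y. adj M x y)"

definition S_leaf :: "real mat \<Rightarrow> real vec \<Rightarrow> nat \<Rightarrow> bool" where
  "S_leaf M f x \<longleftrightarrow> deg M x = 1 \<and> f $ x * sgn_edge M x (leaf_nb M x) * f $ leaf_nb M x > 0"

(* Of two adjacent S-leaves only the one with the smaller index is kept, which makes this set
   independent in the graph. *)
definition unpaired_S_leaves :: "real mat \<Rightarrow> real vec \<Rightarrow> nat set" where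
  "unpaired_S_leaves M f =
     {x. S_leaf M f x \<and> \<not> (S_leaf M f (leaf_nb M x) \<and> leaf_nb M x < x)}"

lemma
  assumes "deg M x = 1"
  shows leaf_nb_adj: "adj M x (leaf_nb M x)"
    and leaf_nb_unique: "adj M x y \<Longrightarrow> y = leaf_nb M x"
proof -
  obtain z where z: "{y. adj M x y} = {z}"
    using assms unfolding deg_def by (metis card_1_singletonE)
  then have "leaf_nb M x = z" unfolding leaf_nb_def by (intro the_equality) auto
  then show "adj M x (leaf_nb M x)" "adj M x y \<Longrightarrow> y = leaf_nb M x" using z by auto
qed

lemma adj_sym:
  "M \<in> carrier_mat n n \<Longrightarrow> transpose_mat M = M \<Longrightarrow> adj M x y \<Longrightarrow> adj M y x"
  unfolding adj_def by (metis carrier_matD index_transpose_mat(1))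

lemma leaf_nb_leaf_nb:
  assumes "M \<in> carrier_mat n n" "transpose_mat M = M" "deg M x = 1" "deg M (leaf_nb M x) = 1"
  shows "leaf_nb M (leaf_nb M x) = x"
proof -
  have "adj M (leaf_nb M x) x" using adj_sym[OF assms(1,2) leaf_nb_adj[OF assms(3)]] .
  then show ?thesis using leaf_nb_unique[OF assms(4)] by simp
qed

lemma S_leafD:
  assumes "S_leaf M f x"
  shows "deg M x = 1" "x < dim_row M" "f $ x \<noteq> 0" "f $ leaf_nb M x \<noteq> 0"
  using assms leaf_nb_adj[of M x] unfolding S_leaf_def adj_def by auto

lemma S_walk_first_edge:
  assumes "S_walk M f ys"
  shows "adj M (hd ys) (ys ! 1) \<and> f $ hd ys * sgn_edge M (hd ys) (ys ! 1) * f $ (ys ! 1) > 0"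
proof -
  have "Suc 0 < length ys" using assms unfolding S_walk_def walk_def by simp
  moreover have "Suc 0 < length ys \<longrightarrow>
      adj M (ys ! 0) (ys ! 1) \<and> f $ (ys ! 0) * sgn_edge M (ys ! 0) (ys ! 1) * f $ (ys ! 1) > 0"
    using assms unfolding S_walk_def walk_def by simp
  moreover have "hd ys = ys ! 0" using calculation(1) by (cases ys) auto
  ultimately show ?thesis by simp
qed

lemma strong_rel_leaf_not_S_leaf:
  assumes leaf: "deg M x = 1" and not_S: "\<not> S_leaf M f x" and rel: "(x, y) \<in> strong_rel M f"
  shows "y = x"
proof (rule ccontr)
  assume "y \<noteq> x"
  then obtain ys where ys: "S_walk M f ys" "hd ys = x" using rel unfolding strong_rel_def by auto
  have edge: "adj M x (ys ! 1)" "f $ x * sgn_edge M x (ys ! 1) * f $ (ys ! 1) > 0"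
    using S_walk_first_edge[OF ys(1)] ys(2) by auto
  then have "ys ! 1 = leaf_nb M x" using leaf_nb_unique[OF leaf] by blast
  then show False using edge(2) leaf not_S unfolding S_leaf_def by simp
qed

lemma strong_rel_leaf_pair:
  assumes x: "deg M x = 1" and y: "deg M y = 1"
    and xy: "leaf_nb M x = y" and yx: "leaf_nb M y = x"
    and rel: "(x, z) \<in> strong_rel M f"
  shows "z = x \<or> z = y"
proof -
  consider "z = x" | ys where "S_walk M f ys" "hd ys = x" "last ys = z"
    using rel unfolding strong_rel_def by auto
  then show ?thesis
  proof cases
    case 2
    have len: "length ys \<ge> 2" using \<open>S_walk M f ys\<close> unfolding S_walk_def walk_def by simp
    have on_pair: "ys ! j = x \<or> ys ! j = y" if "j < length ys" for j
      using that
    proof (induction j)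
      case 0
      then show ?case using \<open>hd ys = x\<close> by (simp add: hd_conv_nth)
    next
      case (Suc j)
      then have "adj M (ys ! j) (ys ! Suc j)"
        using \<open>S_walk M f ys\<close> unfolding S_walk_def walk_def by simp
      then show ?case using Suc leaf_nb_unique[OF x] leaf_nb_unique[OF y] xy yx by auto
    qed
    have "ys \<noteq> []" using len by auto
    then show ?thesis using on_pair[of "length ys - 1"] \<open>last ys = z\<close> by (simp add: last_conv_nth)
  qed simp
qed

lemma card_le_strong_nodal_domains:
  assumes T: "T \<subseteq> nonzero_set M f"
    and separated: "\<And>x y. x \<in> T \<Longrightarrow> y \<in> T \<Longrightarrow> (x, y) \<in> strong_rel M f \<Longrightarrow> x = y"
  shows "card T \<le> strong_nodal_domains M f"
proof -
  have fin: "finite (nonzero_set M f // strong_rel M f)"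
    unfolding nonzero_set_def quotient_def by simp
  have self: "x \<in> strong_rel M f `` {x}" if "x \<in> nonzero_set M f" for x
    using that unfolding strong_rel_def by auto
  have "inj_on (\<lambda>x. strong_rel M f `` {x}) T"
    using T self separated by (intro inj_onI) blast
  moreover have "(\<lambda>x. strong_rel M f `` {x}) ` T \<subseteq> nonzero_set M f // strong_rel M f"
    using T by (auto intro: quotientI)
  ultimately show ?thesis
    unfolding strong_nodal_domains_def using card_inj_on_le fin by blast
qed

lemma eigen_equation_at_leaf:
  fixes M :: "real mat"
  assumes M: "M \<in> carrier_mat n n" and f: "f \<in> carrier_vec n"
    and ev: "M *\<^sub>v f = lam \<cdot>\<^sub>v f" and leaf: "deg M x = 1"
  shows "M $$ (x, x) * f $ x + M $$ (x, leaf_nb M x) * f $ leaf_nb M x = lam * f $ x"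
proof -
  define y where "y = leaf_nb M x"
  have "adj M x y" using leaf_nb_adj[OF leaf] unfolding y_def .
  then have x: "x < n" and y: "y < n" and xy: "x \<noteq> y" using M unfolding adj_def by auto
  have other: "M $$ (x, j) = 0" if "j < n" "j \<noteq> x" "j \<noteq> y" for j
    using that leaf_nb_unique[OF leaf, of j] M x unfolding adj_def y_def by auto
  have "lam * f $ x = (\<Sum>j\<in>{0..<n}. M $$ (x, j) * f $ j)"
    using arg_cong[OF ev, of "\<lambda>v. v $ x"] M f x by (simp add: scalar_prod_def row_def)
  also have "\<dots> = (\<Sum>j\<in>{0..<n}. (if j = x then M $$ (x, x) * f $ x else 0) +
      (if j = y then M $$ (x, y) * f $ y else 0))"
    by (rule sum.cong) (use other xy in auto)
  also have "\<dots> = M $$ (x, x) * f $ x + M $$ (x, y) * f $ y"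
    using x y by (simp add: sum.distrib)
  finally show ?thesis unfolding y_def by simp
qed

lemma diag_ge_eigenvalue_at_leaf:
  fixes M :: "real mat"
  assumes M: "M \<in> carrier_mat n n" and f: "f \<in> carrier_vec n"
    and ev: "M *\<^sub>v f = lam \<cdot>\<^sub>v f" and leaf: "deg M x = 1" and fx: "f $ x \<noteq> 0"
    and nb: "f $ leaf_nb M x = 0 \<or> S_leaf M f x"
  shows "M $$ (x, x) \<ge> lam"
proof -
  define y where "y = leaf_nb M x"
  define m where "m = M $$ (x, y)"
  have row: "M $$ (x, x) * f $ x - lam * f $ x = - m * f $ y"
    using eigen_equation_at_leaf[OF M f ev leaf] unfolding y_def m_def by linarith
  have "(M $$ (x, x) - lam) * (f $ x)\<^sup>2 = f $ x * (M $$ (x, x) * f $ x - lam * f $ x)"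
    by (simp add: algebra_simps power2_eq_square)
  also have "\<dots> = - m * f $ x * f $ y" unfolding row by simp
  finally have "(M $$ (x, x) - lam) * (f $ x)\<^sup>2 = - m * f $ x * f $ y" .
  moreover have "- m * f $ x * f $ y \<ge> 0"
  proof (cases "f $ y = 0")
    case False
    then have S: "f $ x * sgn_edge M x y * f $ y > 0" using nb unfolding S_leaf_def y_def by simp
    then have "m \<noteq> 0" unfolding sgn_edge_def m_def by auto
    then have "- m * f $ x * f $ y = \<bar>m\<bar> * (f $ x * sgn_edge M x y * f $ y)"
      unfolding sgn_edge_def m_def[symmetric] by (simp add: field_simps)
    then show ?thesis using S by simp
  qed simp
  ultimately have "0 \<le> (M $$ (x, x) - lam) * (f $ x)\<^sup>2" by simp
  then show ?thesis using fx by (simp add: zero_le_mult_iff)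
qed

lemma card_zero_nb_leaves_add_unpaired_S_leaves_le:
  fixes M :: "real mat"
  assumes M: "M \<in> carrier_mat n n" and sym: "transpose_mat M = M"
    and k: "1 \<le> k" "k \<le> n" and gap: "k > 1 \<longrightarrow> eig M (k - 1) < eig M k"
    and ev: "eigenvector M f (eig M k)"
  shows "card {x. x < n \<and> deg M x = 1 \<and> f $ x \<noteq> 0 \<and> (\<forall>x'. adj M x x' \<longrightarrow> f $ x' = 0)}
      + card (unpaired_S_leaves M f) + k \<le> n + 1"
proof -
  define Z where "Z = {x. x < n \<and> deg M x = 1 \<and> f $ x \<noteq> 0 \<and> (\<forall>x'. adj M x x' \<longrightarrow> f $ x' = 0)}"
  define C where "C = unpaired_S_leaves M f"
  have f: "f \<in> carrier_vec n" and Mf: "M *\<^sub>v f = eig M k \<cdot>\<^sub>v f"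
    using ev M unfolding eigenvector_def by auto
  have Z: "deg M x = 1" "x < n" "f $ x \<noteq> 0" "f $ leaf_nb M x = 0" if "x \<in> Z" for x
    using that leaf_nb_adj[of M x] unfolding Z_def by auto
  have C: "S_leaf M f x" "\<not> (S_leaf M f (leaf_nb M x) \<and> leaf_nb M x < x)" if "x \<in> C" for x
    using that unfolding C_def unpaired_S_leaves_def by auto
  have C_leaf: "deg M x = 1" "x < n" "f $ x \<noteq> 0" "f $ leaf_nb M x \<noteq> 0" if "x \<in> C" for x
    using S_leafD[OF C(1)[OF that]] M by auto
  have ZC: "Z \<inter> C = {}" using Z(4) C_leaf(4) by blast
  have fin: "finite Z" "finite C" using Z(2) C_leaf(2) by (meson finite_lessThan finite_subset subsetI lessThan_iff)+
  have "card (Z \<union> C) + k \<le> n + 1"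
  proof (rule card_diagonal_block_le[OF M sym k gap])
    show "Z \<union> C \<subseteq> {0..<n}" using Z(2) C_leaf(2) by auto
    show "eig M k \<le> M $$ (x, x)" if "x \<in> Z \<union> C" for x
      using that Z C C_leaf by (auto intro: diag_ge_eigenvalue_at_leaf[OF M f Mf])
    show "M $$ (x, y) = 0" if x: "x \<in> Z \<union> C" and y: "y \<in> Z \<union> C" and "x \<noteq> y" for x y
    proof (rule ccontr)
      assume "M $$ (x, y) \<noteq> 0"
      then have "adj M x y" using x y \<open>x \<noteq> y\<close> Z(2) C_leaf(2) M unfolding adj_def by auto
      moreover have "deg M x = 1" "deg M y = 1" using x y Z(1) C_leaf(1) by auto
      ultimately have xy: "leaf_nb M x = y" and yx: "leaf_nb M y = x"
        using leaf_nb_unique adj_sym[OF M sym] by metis+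
      have "f $ x \<noteq> 0" "f $ y \<noteq> 0" using x y Z(3) C_leaf(3) by auto
      then have "x \<notin> Z" "y \<notin> Z" using Z(4)[of x] Z(4)[of y] xy yx by auto
      then have "x \<in> C" "y \<in> C" using x y by auto
      then show False using C xy yx \<open>x \<noteq> y\<close> by (metis linorder_neqE_nat)
    qed
  qed
  then show ?thesis using card_Un_disjoint[OF fin ZC] unfolding Z_def C_def by simp
qed

lemma card_nonzero_leaves_le:
  fixes M :: "real mat"
  assumes M: "M \<in> carrier_mat n n" and sym: "transpose_mat M = M"
  shows "card {x. x < n \<and> deg M x = 1 \<and> f $ x \<noteq> 0}
      \<le> strong_nodal_domains M f + card (unpaired_S_leaves M f)"
proof -
  define L where "L = {x. x < n \<and> deg M x = 1 \<and> f $ x \<noteq> 0}"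
  define C where "C = unpaired_S_leaves M f"
  have CL: "C \<subseteq> L" using S_leafD M unfolding C_def unpaired_S_leaves_def L_def by auto
  have "card (L - C) \<le> strong_nodal_domains M f"
  proof (rule card_le_strong_nodal_domains)
    show "L - C \<subseteq> nonzero_set M f" using M unfolding L_def nonzero_set_def by auto
    show "x = y" if x: "x \<in> L - C" and y: "y \<in> L - C" and rel: "(x, y) \<in> strong_rel M f" for x y
    proof (cases "S_leaf M f x")
      case False
      then show ?thesis using strong_rel_leaf_not_S_leaf rel x unfolding L_def by auto
    next
      case True
      define x' where "x' = leaf_nb M x"
      have "S_leaf M f x'" "x' < x"
        using True x unfolding x'_def C_def unpaired_S_leaves_def by auto
      moreover have "deg M x = 1" "deg M x' = 1" using True \<open>S_leaf M f x'\<close> S_leafD by auto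
      moreover have x'x: "leaf_nb M x' = x"
        using calculation leaf_nb_leaf_nb[OF M sym] unfolding x'_def by blast
      ultimately have "x' \<in> C" unfolding C_def unpaired_S_leaves_def by auto
      then show ?thesis
        using strong_rel_leaf_pair[OF \<open>deg M x = 1\<close> \<open>deg M x' = 1\<close> x'_def[symmetric] x'x rel] y
        by auto
    qed
  qed
  moreover have "finite L" unfolding L_def by simp
  ultimately show ?thesis
    using card_Diff_subset[OF finite_subset[OF CL] CL] card_mono[OF _ CL]
    unfolding L_def[symmetric] C_def[symmetric] by linarith
qed

theorem theorem6p10:
  fixes M :: "real mat" and f :: "real vec" and n k :: nat
  assumes "M \<in> carrier_mat n n"
    and "transpose_mat M = M"
    and "1 \<le> k" "k \<le> n"
    and "k > 1 \<longrightarrow> eig M (k - 1) < eig M k"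
    and "eigenvector M f (eig M k)"
  shows "int (strong_nodal_domains M f) \<ge>
           int k + int (card {x. x < n \<and> deg M x = 1}) - 1 - int n
           - int (card {x. x < n \<and> deg M x = 1 \<and> f $ x = 0})
           + int (card {x. x < n \<and> deg M x = 1 \<and> f $ x \<noteq> 0 \<and>
                          (\<forall>x'. adj M x x' \<longrightarrow> f $ x' = 0)})"
proof -
  have "card {x. x < n \<and> deg M x = 1} =
      card {x. x < n \<and> deg M x = 1 \<and> f $ x \<noteq> 0} + card {x. x < n \<and> deg M x = 1 \<and> f $ x = 0}"
    by (subst card_Un_disjoint[symmetric]) (auto intro: arg_cong[where f = card])
  then show ?thesis
    using card_nonzero_leaves_le[OF assms(1,2), of f] card_zero_nb_leaves_add_unpaired_S_leaves_le[OF assms]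
    by linarith
qed

end
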